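(* Let $m \ge 1$, let $\omega_0 \in \mathbb{R}$, $\gamma > 0$, let $\tilde C \in M_m$ be invertible, and let $\tilde{\boldsymbol\kappa}, \tilde{\boldsymbol d} \in \mathbb{C}^m$ (column vectors). For $\omega \in \mathbb{R}$ define $$\tilde S(\omega) = \tilde C + \frac{\tilde{\boldsymbol d}\,\tilde{\boldsymbol\kappa}^T}{-i(\omega-\omega_0) + \gamma}, \qquad \tilde\rho = -\frac{\tilde{\boldsymbol\kappa}^T \tilde C^{-1}\tilde{\boldsymbol d}}{2\gamma} \in \mathbb{C}.$$ Then as $\omega$ runs over $\mathbb{R}$, $\det\tilde S(\omega)$ traces out a circle in $\mathbb{C}$ (with $\det \tilde S(\omega) \to \det\tilde C$ as $\omega \to \pm\infty$), and: if $\operatorname{Re}\tilde\rho = \tfrac12$ this circle passes through the origin; if $\operatorname{Re}\tilde\rho \neq \tfrac12$ then $\det\tilde S(\omega)\neq 0$ for all real $\omega$ and the winding number of $\det\tilde S$ about the origin satisfies $$\operatorname{wn}(\tilde S) = \begin{cases} 0, & \operatorname{Re}\tilde\rho < \tfrac12,\\ 1, & \operatorname{Re}\tilde\rho > \tfrac12.\end{cases}$$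
   Context: $M_m$ denotes the complex $m\times m$ matrices. The winding number is $\operatorname{wn}(\tilde S) = \frac{1}{2\pi i}\int_{-\infty}^{\infty} \frac{1}{\det\tilde S(\omega)}\frac{d \det\tilde S(\omega)}{d\omega}\,d\omega$, i.e. the net change of a continuous polar angle of $\det\tilde S(\omega)$, divided by $2\pi$, as $\omega$ goes from $-\infty$ to $+\infty$ (the curve closes up since both limits equal $\det\tilde C$). *)

theory Defs
  imports "HOL-Analysis.Analysis"
begin

definition wn :: "(real \<Rightarrow> complex) \<Rightarrow> real" where
  "wn f = (THE w. \<exists>\<theta>::real \<Rightarrow> real. continuous_on UNIV \<theta> \<and>
              (\<forall>x. f x = complex_of_real (cmod (f x)) * cis (\<theta> x)) \<and>
              ((\<lambda>x. (\<theta> x - \<theta> (- x)) / (2 * pi)) \<longlongrightarrow> w) at_top)"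

definition Smat :: "complex^'m^'m \<Rightarrow> complex^'m \<Rightarrow> complex^'m \<Rightarrow> real \<Rightarrow> real \<Rightarrow> real \<Rightarrow> complex^'m^'m" where
  "Smat C \<kappa> d \<omega>0 \<gamma> \<omega> = (\<chi> i j. C $ i $ j + d $ i * \<kappa> $ j /
        (- \<i> * complex_of_real (\<omega> - \<omega>0) + complex_of_real \<gamma>))"

definition rho :: "complex^'m^'m \<Rightarrow> complex^'m \<Rightarrow> complex^'m \<Rightarrow> real \<Rightarrow> complex" where
  "rho C \<kappa> d \<gamma> = - (\<Sum>j\<in>UNIV. \<kappa> $ j * (matrix_inv C *v d) $ j) / (2 * complex_of_real \<gamma>)"

end

theory Submission
  imports Defs "HOL-Real_Asymp.Real_Asymp"
begin

(* By the matrix determinant lemma, det S(omega) = det C * (1 + a / (gamma - i (omega - omega0)))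
   with a = kappa^T C^-1 d = -2 gamma rho. Writing omega - omega0 = gamma tan alpha with
   alpha in (-pi/2, pi/2), one has 2 / (1 - i tan alpha) = 1 + e^(2 i alpha), hence
   det S(omega) = A - B e^(2 i alpha) with A = det C (1 - rho) and B = det C rho: the circle of
   radius |B| about A, run through once and missing only the point A + B = det C, which is the
   limit as omega -> +-infinity. The origin lies on it iff |1 - rho| = |rho|, i.e. Re rho = 1/2.
   If |B| < |A| the curve is A (1 - q e^(2 i alpha)) with |q| < 1, whose second factor stays in
   the right half-plane, so it does not wind; if |B| > |A| it is
   -B e^(2 i alpha) (1 - q e^(-2 i alpha)), and the phase 2 alpha increases by 2 pi. *)

lemma polar_mult_cis:
  fixes K z :: complex
  assumes "K \<noteq> 0" "z \<noteq> 0"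
  shows "K * z * cis t = complex_of_real (cmod (K * z * cis t)) * cis (Arg K + t + Arg z)"
proof -
  have "K * z * cis t = rcis (cmod K) (Arg K) * rcis (cmod z) (Arg z) * cis t"
    by (simp only: rcis_cmod_Arg)
  then show ?thesis
    by (simp add: rcis_def norm_mult cis_mult[symmetric] ac_simps)
qed

lemma Re_one_minus_pos: "cmod z < 1 \<Longrightarrow> 0 < Re (1 - z)"
  using complex_Re_le_cmod[of z] by simp

lemma cmod_one_minus_power2: "(cmod (1 - z))\<^sup>2 = (cmod z)\<^sup>2 + 1 - 2 * Re z"
  unfolding cmod_power2 by (simp add: power2_eq_square algebra_simps)

lemma cmod_less_cmod_one_minus_iff: "cmod z < cmod (1 - z) \<longleftrightarrow> Re z < 1/2"
proof -
  have "cmod z < cmod (1 - z) \<longleftrightarrow> (cmod z)\<^sup>2 < (cmod (1 - z))\<^sup>2"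
    by (simp add: abs_le_square_iff[of "cmod (1 - z)" "cmod z", symmetric] not_le[symmetric])
  then show ?thesis
    unfolding cmod_one_minus_power2 by auto
qed

lemma cmod_one_minus_eq_cmod_iff: "cmod (1 - z) = cmod z \<longleftrightarrow> Re z = 1/2"
proof -
  have "cmod (1 - z) = cmod z \<longleftrightarrow> (cmod (1 - z))\<^sup>2 = (cmod z)\<^sup>2"
    by (simp add: power2_eq_iff_nonneg)
  then show ?thesis
    unfolding cmod_one_minus_power2 by auto
qed

lemma one_plus_cis_double_arctan: "1 + cis (2 * arctan s) = 2 / (1 - \<i> * complex_of_real s)"
proof -
  have nz: "1 - \<i> * complex_of_real s \<noteq> 0" "1 + \<i> * complex_of_real s \<noteq> 0"
    by (simp_all add: complex_eq_iff)
  have "cis (arctan s) = (1 + \<i> * s) / sqrt (1 + s\<^sup>2)"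
    by (simp add: complex_eq_iff cos_arctan sin_arctan)
  moreover have "cis (2 * arctan s) = cis (arctan s) ^ 2"
    by (simp only: power2_eq_square cis_mult mult_2)
  ultimately have "cis (2 * arctan s) = (1 + \<i> * s)\<^sup>2 / complex_of_real (1 + s\<^sup>2)"
    by (simp add: power_divide flip: of_real_power)
  also have "complex_of_real (1 + s\<^sup>2) = (1 + \<i> * s) * (1 - \<i> * s)"
    by (simp add: algebra_simps power2_eq_square)
  finally have "cis (2 * arctan s) = (1 + \<i> * s) / (1 - \<i> * s)"
    using nz by (simp add: power2_eq_square)
  then show ?thesis
    using nz by (simp add: field_simps)
qed

lemma circle_double_arctan:
  fixes c B :: complex
  shows "range (\<lambda>t. c - B * cis (2 * arctan t)) \<union> {c + B} = sphere c (cmod B)"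
proof
  show "range (\<lambda>t. c - B * cis (2 * arctan t)) \<union> {c + B} \<subseteq> sphere c (cmod B)"
    by (auto simp: dist_norm norm_mult)
  show "sphere c (cmod B) \<subseteq> range (\<lambda>t. c - B * cis (2 * arctan t)) \<union> {c + B}"
  proof
    fix w
    assume w: "w \<in> sphere c (cmod B)"
    show "w \<in> range (\<lambda>t. c - B * cis (2 * arctan t)) \<union> {c + B}"
    proof (cases "w = c + B")
      case False
      with w have B: "B \<noteq> 0"
        by auto
      define e where "e = (c - w) / B"
      have e: "cmod e = 1"
        using w B by (simp add: e_def dist_norm norm_divide)
      then have "e \<noteq> 0"
        by auto
      with e have cis_Arg_e: "cis (Arg e) = e"
        by (simp add: cis_Arg sgn_div_norm)
      moreover have "e \<noteq> -1"
        using False B by (auto simp: e_def field_simps)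
      ultimately have "Arg e \<noteq> pi"
        by auto
      then have "arctan (tan (Arg e / 2)) = Arg e / 2"
        using Arg_bounded[of e] by (intro arctan_tan) auto
      then have "2 * arctan (tan (Arg e / 2)) = Arg e"
        by simp
      then have "c - B * cis (2 * arctan (tan (Arg e / 2))) = c - B * e"
        using cis_Arg_e by simp
      also have "c - B * e = w"
        using B by (simp add: e_def)
      finally show ?thesis
        by blast
    qed simp
  qed
qed

lemma wn_eqI:
  fixes f :: "real \<Rightarrow> complex" and \<theta> :: "real \<Rightarrow> real"
  assumes cont: "continuous_on UNIV \<theta>"
    and polar: "\<And>x. f x = complex_of_real (cmod (f x)) * cis (\<theta> x)"
    and nz: "\<And>x. f x \<noteq> 0"
    and lim: "((\<lambda>x. (\<theta> x - \<theta> (- x)) / (2 * pi)) \<longlongrightarrow> w) at_top"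
  shows "wn f = w"
  unfolding wn_def
proof (rule the_equality)
  show "\<exists>\<theta>. continuous_on UNIV \<theta> \<and> (\<forall>x. f x = complex_of_real (cmod (f x)) * cis (\<theta> x)) \<and>
      ((\<lambda>x. (\<theta> x - \<theta> (- x)) / (2 * pi)) \<longlongrightarrow> w) at_top"
    using assms by blast
next
  fix w'
  assume "\<exists>\<theta>'. continuous_on UNIV \<theta>' \<and> (\<forall>x. f x = complex_of_real (cmod (f x)) * cis (\<theta>' x)) \<and>
      ((\<lambda>x. (\<theta>' x - \<theta>' (- x)) / (2 * pi)) \<longlongrightarrow> w') at_top"
  then obtain \<theta>' where cont': "continuous_on UNIV \<theta>'"
    and polar': "\<And>x. f x = complex_of_real (cmod (f x)) * cis (\<theta>' x)"
    and lim': "((\<lambda>x. (\<theta>' x - \<theta>' (- x)) / (2 * pi)) \<longlongrightarrow> w') at_top"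
    by blast
  define g where "g x = (\<theta>' x - \<theta> x) / (2 * pi)" for x
  have g_Ints: "g x \<in> \<int>" for x
  proof -
    have "cis (\<theta>' x) = cis (\<theta> x)"
      using polar[of x] polar'[of x] nz[of x] by (metis mult_left_cancel norm_eq_zero of_real_eq_0_iff)
    then obtain n :: int where "\<theta>' x = \<theta> x + 2 * pi * n"
      using sin_cos_eq_iff by (metis cis.sel)
    then show ?thesis unfolding g_def by simp
  qed
  \<comment> \<open>Two continuous lifts differ by a continuous integer-valued function, hence by a constant.\<close>
  have "g constant_on UNIV"
  proof (rule continuous_discrete_range_constant)
    show "continuous_on UNIV g"
      unfolding g_def by (intro continuous_intros cont cont') auto
    show "\<exists>e>0. \<forall>y. y \<in> UNIV \<and> g y \<noteq> g x \<longrightarrow> e \<le> norm (g y - g x)" for x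
    proof (intro exI[of _ 1] conjI allI impI)
      fix y assume "y \<in> UNIV \<and> g y \<noteq> g x"
      then show "1 \<le> norm (g y - g x)"
        using Ints_nonzero_abs_ge1[of "g y - g x"] g_Ints[of x] g_Ints[of y] by auto
    qed simp
  qed simp
  then have "g x = g (- x)" for x
    unfolding constant_on_def by auto
  then have "(\<theta>' x - \<theta>' (- x)) / (2 * pi) = (\<theta> x - \<theta> (- x)) / (2 * pi)" for x
    unfolding g_def by (simp add: field_simps)
  then have "((\<lambda>x. (\<theta> x - \<theta> (- x)) / (2 * pi)) \<longlongrightarrow> w') at_top"
    using lim' by simp
  then show "w' = w"
    using lim by (rule tendsto_unique[OF trivial_limit_at_top_linorder])
qed

lemma wn_mult_cis:
  fixes K l :: complex and h :: "real \<Rightarrow> complex" and \<phi> :: "real \<Rightarrow> real"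
  assumes K: "K \<noteq> 0"
    and h_cont: "continuous_on UNIV h" and h_Re: "\<And>x. 0 < Re (h x)"
    and h_top: "(h \<longlongrightarrow> l) at_top" and h_bot: "(h \<longlongrightarrow> l) at_bot" and l: "0 < Re l"
    and \<phi>_cont: "continuous_on UNIV \<phi>"
    and \<phi>_lim: "((\<lambda>x. (\<phi> x - \<phi> (- x)) / (2 * pi)) \<longlongrightarrow> w) at_top"
  shows "wn (\<lambda>x. K * h x * cis (\<phi> x)) = w"
proof -
  have h_nonpos: "h x \<notin> \<real>\<^sub>\<le>\<^sub>0" for x
    using h_Re[of x] by (auto simp: complex_nonpos_Reals_iff)
  have l_nonpos: "l \<notin> \<real>\<^sub>\<le>\<^sub>0"
    using l by (auto simp: complex_nonpos_Reals_iff)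
  have h_nz: "h x \<noteq> 0" for x
    using h_Re[of x] by auto
  define \<theta> where "\<theta> x = Arg K + \<phi> x + Arg (h x)" for x
  have h_neg: "((\<lambda>x. h (- x)) \<longlongrightarrow> l) at_top"
    using h_bot by (simp add: filterlim_at_bot_mirror)
  have "((\<lambda>x. (\<phi> x - \<phi> (- x)) / (2 * pi) + (Arg (h x) - Arg (h (- x))) / (2 * pi))
      \<longlongrightarrow> w + (Arg l - Arg l) / (2 * pi)) at_top"
    by (intro tendsto_intros \<phi>_lim h_top h_neg l_nonpos) simp
  moreover have "(\<theta> x - \<theta> (- x)) / (2 * pi)
      = (\<phi> x - \<phi> (- x)) / (2 * pi) + (Arg (h x) - Arg (h (- x))) / (2 * pi)" for x
    unfolding \<theta>_def by (simp add: diff_divide_distrib add_divide_distrib)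
  ultimately have lim: "((\<lambda>x. (\<theta> x - \<theta> (- x)) / (2 * pi)) \<longlongrightarrow> w) at_top"
    by simp
  show ?thesis
  proof (rule wn_eqI[OF _ _ _ lim])
    show "continuous_on UNIV \<theta>"
      unfolding \<theta>_def using h_cont \<phi>_cont h_nonpos by (intro continuous_intros) auto
    show "K * h x * cis (\<phi> x) = complex_of_real (cmod (K * h x * cis (\<phi> x))) * cis (\<theta> x)" for x
      unfolding \<theta>_def by (rule polar_mult_cis[OF K h_nz])
    show "K * h x * cis (\<phi> x) \<noteq> 0" for x
      using K h_nz by simp
  qed
qed

lemma wn_circle:
  fixes A B :: complex and \<phi> :: "real \<Rightarrow> real"
  assumes AB: "cmod B \<noteq> cmod A" and \<phi>_cont: "continuous_on UNIV \<phi>"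
    and \<phi>_top: "(\<phi> \<longlongrightarrow> pi) at_top" and \<phi>_bot: "(\<phi> \<longlongrightarrow> - pi) at_bot"
  shows "wn (\<lambda>x. A - B * cis (\<phi> x)) = (if cmod B < cmod A then 0 else 1)"
proof (cases "cmod B < cmod A")
  case True
  then have A: "A \<noteq> 0"
    by auto
  define q where "q = B / A"
  have q: "cmod q < 1"
    unfolding q_def using True A by (simp add: norm_divide divide_less_eq)
  define h where "h x = 1 - q * cis (\<phi> x)" for x
  have "wn (\<lambda>x. A * h x * cis 0) = 0"
  proof (rule wn_mult_cis[OF A])
    show "continuous_on UNIV h"
      unfolding h_def by (intro continuous_intros \<phi>_cont)
    show "0 < Re (h x)" for x
      unfolding h_def by (rule Re_one_minus_pos) (simp add: norm_mult q)
    have "(h \<longlongrightarrow> 1 - q * cis pi) at_top"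
      unfolding h_def by (intro tendsto_intros \<phi>_top)
    then show "(h \<longlongrightarrow> 1 + q) at_top"
      by simp
    have "(h \<longlongrightarrow> 1 - q * cis (- pi)) at_bot"
      unfolding h_def by (intro tendsto_intros \<phi>_bot)
    then show "(h \<longlongrightarrow> 1 + q) at_bot"
      by (simp flip: cis_cnj)
    show "0 < Re (1 + q)"
      using Re_one_minus_pos[of "- q"] q by simp
  qed simp_all
  moreover have "A * h x * cis 0 = A - B * cis (\<phi> x)" for x
    unfolding h_def q_def using A by (simp add: algebra_simps)
  ultimately show ?thesis
    using True by simp
next
  case False
  then have lt: "cmod A < cmod B"
    using AB by simp
  then have B: "- B \<noteq> 0"
    by auto
  define q where "q = A / B"
  have q: "cmod q < 1"
    unfolding q_def using lt B by (simp add: norm_divide divide_less_eq)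
  define h where "h x = 1 - q * cis (- \<phi> x)" for x
  have "wn (\<lambda>x. - B * h x * cis (\<phi> x)) = 1"
  proof (rule wn_mult_cis[OF B])
    show "continuous_on UNIV h"
      unfolding h_def by (intro continuous_intros \<phi>_cont)
    show "0 < Re (h x)" for x
      unfolding h_def by (rule Re_one_minus_pos) (simp add: norm_mult q)
    have "(h \<longlongrightarrow> 1 - q * cis (- pi)) at_top"
      unfolding h_def by (intro tendsto_intros \<phi>_top)
    then show "(h \<longlongrightarrow> 1 + q) at_top"
      by (simp flip: cis_cnj)
    have "(h \<longlongrightarrow> 1 - q * cis (- (- pi))) at_bot"
      unfolding h_def by (intro tendsto_intros \<phi>_bot)
    then show "(h \<longlongrightarrow> 1 + q) at_bot"
      by simp
    show "0 < Re (1 + q)"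
      using Re_one_minus_pos[of "- q"] q by simp
    have \<phi>_neg: "((\<lambda>x. \<phi> (- x)) \<longlongrightarrow> - pi) at_top"
      using \<phi>_bot by (simp add: filterlim_at_bot_mirror)
    have "((\<lambda>x. (\<phi> x - \<phi> (- x)) / (2 * pi)) \<longlongrightarrow> (pi - - pi) / (2 * pi)) at_top"
      by (intro tendsto_intros \<phi>_top \<phi>_neg) simp
    then show "((\<lambda>x. (\<phi> x - \<phi> (- x)) / (2 * pi)) \<longlongrightarrow> 1) at_top"
      by simp
  qed (use \<phi>_cont in simp_all)
  moreover have "- B * h x * cis (\<phi> x) = A - B * cis (\<phi> x)" for x
    unfolding h_def q_def using B by (simp add: algebra_simps cis_mult)
  ultimately show ?thesis
    using False by simp
qed

lemma det_add_row_multiples: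
  fixes A :: "'a::comm_ring_1^'n^'n"
  assumes "finite T" "k \<notin> T"
  shows "det (\<chi> i. if i \<in> T then row i A + c i *s row k A else row i A) = det A"
  using assms
proof (induction T rule: finite_induct)
  case empty
  then show ?case
    by (simp add: row_def vec_nth_inverse)
next
  case (insert t T)
  define B where "B = (\<chi> i. if i \<in> T then row i A + c i *s row k A else row i A)"
  have "t \<noteq> k" "k \<notin> T"
    using insert.prems by auto
  then have "(\<chi> i. if i \<in> insert t T then row i A + c i *s row k A else row i A)
      = (\<chi> i. if i = t then row t B + c t *s row k B else row i B)"
    using insert.hyps(2) by (auto simp: vec_eq_iff row_def B_def)
  then show ?case
    using det_row_operation[OF \<open>t \<noteq> k\<close>, of B "c t"] insert.IH[OF \<open>k \<notin> T\<close>] by (simp add: B_def)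
qed

lemma det_add_rank_one_rows:
  fixes A :: "'a::comm_ring_1^'n^'n"
  assumes "finite T"
  shows "det (\<chi> i. if i \<in> T then row i A + u i *s v else row i A)
       = det A + (\<Sum>k\<in>T. u k * det (\<chi> i. if i = k then v else row i A))"
  using assms
proof (induction T rule: finite_induct)
  case empty
  then show ?case
    by (simp add: row_def vec_nth_inverse)
next
  case (insert z T)
  define B where "B = (\<chi> i. if i \<in> T then row i A + u i *s v else row i A)"
  define A' where "A' = (\<chi> i. if i = z then v else row i A)"
  have "(\<chi> i. if i \<in> insert z T then row i A + u i *s v else row i A)
      = (\<chi> i. if i = z then row i B + u z *s v else row i B)"
    using insert.hyps(2) by (auto simp: vec_eq_iff row_def B_def)
  then have "det (\<chi> i. if i \<in> insert z T then row i A + u i *s v else row i A)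
      = det B + u z * det (\<chi> i. if i = z then v else row i B)"
    using det_row_add[of z "\<lambda>i. row i B" "\<lambda>i. u z *s v" "\<lambda>i. row i B"]
      det_row_mul[of z "u z" "\<lambda>i. v" "\<lambda>i. row i B"]
    by (simp add: row_def vec_nth_inverse)
  \<comment> \<open>Once row z is v, the rank-one corrections of the rows in T are row operations.\<close>
  also have "(\<chi> i. if i = z then v else row i B)
      = (\<chi> i. if i \<in> T then row i A' + u i *s row z A' else row i A')"
    using insert.hyps(2) by (auto simp: vec_eq_iff row_def B_def A'_def)
  also have "det \<dots> = det A'"
    using insert.hyps by (intro det_add_row_multiples) auto
  finally show ?case
    using insert.IH insert.hyps by (simp add: B_def A'_def algebra_simps)
qed

lemma matrix_inv_right:
  fixes A :: "'a::semiring_1^'n^'m"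
  assumes "invertible A"
  shows "A ** matrix_inv A = mat 1"
  using someI_ex[of "\<lambda>A'. A ** A' = mat 1 \<and> A' ** A = mat 1"] assms
  unfolding invertible_def matrix_inv_def by blast

lemma det_rank_one_update:
  fixes C :: "'a::field^'n^'n" and u v :: "'a^'n"
  assumes "invertible C"
  shows "det (\<chi> i j. C $ i $ j + u $ i * v $ j)
       = det C * (1 + (\<Sum>j\<in>UNIV. v $ j * (matrix_inv C *v u) $ j))"
proof -
  define x where "x = matrix_inv C *v u"
  have Cx: "C *v x = u"
    unfolding x_def by (simp add: matrix_vector_mul_assoc matrix_inv_right[OF assms])
  have cramer_row: "det (\<chi> i. if i = k then u else row i (transpose C)) = x $ k * det C" for k
  proof -
    have "(\<chi> i. if i = k then u else row i (transpose C))
        = transpose (\<chi> i j. if j = k then (C *v x) $ i else C $ i $ j)"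
      by (simp add: Cx vec_eq_iff transpose_def row_def)
    then show ?thesis
      by (simp add: det_transpose cramer_lemma)
  qed
  have "det (\<chi> i j. C $ i $ j + u $ i * v $ j) = det (transpose (\<chi> i j. C $ i $ j + u $ i * v $ j))"
    by (rule det_transpose[symmetric])
  also have "transpose (\<chi> i j. C $ i $ j + u $ i * v $ j)
      = (\<chi> i. if i \<in> UNIV then row i (transpose C) + v $ i *s u else row i (transpose C))"
    by (simp add: vec_eq_iff transpose_def row_def mult.commute)
  also have "det \<dots> = det (transpose C)
      + (\<Sum>k\<in>UNIV. v $ k * det (\<chi> i. if i = k then u else row i (transpose C)))"
    by (rule det_add_rank_one_rows) simp
  finally show ?thesis
    by (simp add: cramer_row det_transpose x_def sum_distrib_left algebra_simps)
qed

lemma det_Smat: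
  fixes C :: "complex^'m^'m" and \<kappa> d :: "complex^'m" and \<omega>0 \<gamma> \<omega> :: real
  assumes \<gamma>: "\<gamma> > 0" and C: "invertible C"
  shows "det (Smat C \<kappa> d \<omega>0 \<gamma> \<omega>) = det C * (1 - rho C \<kappa> d \<gamma>)
           - det C * rho C \<kappa> d \<gamma> * cis (2 * arctan ((\<omega> - \<omega>0) / \<gamma>))"
proof -
  define s where "s = (\<omega> - \<omega>0) / \<gamma>"
  define z where "z = complex_of_real \<gamma> * (1 - \<i> * complex_of_real s)"
  have "complex_of_real (\<omega> - \<omega>0) = complex_of_real \<gamma> * complex_of_real s"
    unfolding s_def of_real_mult[symmetric] using \<gamma> by simp
  then have z: "- \<i> * complex_of_real (\<omega> - \<omega>0) + complex_of_real \<gamma> = z"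
    by (simp add: z_def algebra_simps)
  have z_nz: "1 - \<i> * complex_of_real s \<noteq> 0"
    by (simp add: complex_eq_iff)
  have "Smat C \<kappa> d \<omega>0 \<gamma> \<omega> = (\<chi> i j. C $ i $ j + (inverse z *s d) $ i * \<kappa> $ j)"
    unfolding Smat_def z by (simp add: vec_eq_iff field_simps)
  then have "det (Smat C \<kappa> d \<omega>0 \<gamma> \<omega>)
      = det C * (1 + (\<Sum>j\<in>UNIV. \<kappa> $ j * (matrix_inv C *v (inverse z *s d)) $ j))"
    by (simp only: det_rank_one_update[OF C])
  also have "(\<Sum>j\<in>UNIV. \<kappa> $ j * (matrix_inv C *v (inverse z *s d)) $ j)
      = inverse z * (\<Sum>j\<in>UNIV. \<kappa> $ j * (matrix_inv C *v d) $ j)"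
    by (simp add: vector_scalar_commute sum_distrib_left mult.left_commute)
  also have "(\<Sum>j\<in>UNIV. \<kappa> $ j * (matrix_inv C *v d) $ j) = - 2 * complex_of_real \<gamma> * rho C \<kappa> d \<gamma>"
    using \<gamma> by (simp add: rho_def)
  also have "inverse z * (- 2 * complex_of_real \<gamma> * rho C \<kappa> d \<gamma>)
      = - rho C \<kappa> d \<gamma> * (2 / (1 - \<i> * complex_of_real s))"
    using \<gamma> z_nz by (simp add: z_def field_simps)
  also have "2 / (1 - \<i> * complex_of_real s) = 1 + cis (2 * arctan s)"
    by (rule one_plus_cis_double_arctan[symmetric])
  finally show ?thesis
    by (simp add: s_def algebra_simps)
qed

lemma cis_double_arctan_curve:
  fixes A B :: complex and a g :: real
  assumes g: "g > 0"
  defines "G \<equiv> \<lambda>x. A - B * cis (2 * arctan ((x - a) / g))"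
  shows "range G \<union> {A + B} = sphere A (cmod B)"
    and "(G \<longlongrightarrow> A + B) at_top" and "(G \<longlongrightarrow> A + B) at_bot"
    and "cmod B \<noteq> cmod A \<Longrightarrow> G x \<noteq> 0"
    and "cmod B \<noteq> cmod A \<Longrightarrow> wn G = (if cmod B < cmod A then 0 else 1)"
proof -
  define \<phi> where "\<phi> = (\<lambda>x. 2 * arctan ((x - a) / g))"
  have "range G = (\<lambda>t. A - B * cis (2 * arctan t)) ` range (\<lambda>x. (x - a) / g)"
    unfolding G_def by (simp add: image_image)
  also have "range (\<lambda>x. (x - a) / g) = UNIV"
    using g by (intro surjI[of _ "\<lambda>t. a + g * t"]) simp
  finally show "range G \<union> {A + B} = sphere A (cmod B)"
    using circle_double_arctan[of A B] by simp
  have G: "G = (\<lambda>x. A - B * cis (\<phi> x))"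
    unfolding G_def \<phi>_def ..
  have \<phi>_top: "(\<phi> \<longlongrightarrow> pi) at_top" and \<phi>_bot: "(\<phi> \<longlongrightarrow> - pi) at_bot"
    unfolding \<phi>_def using g by real_asymp+
  have "(G \<longlongrightarrow> A - B * cis pi) at_top" "(G \<longlongrightarrow> A - B * cis (- pi)) at_bot"
    unfolding G by (intro tendsto_intros \<phi>_top \<phi>_bot)+
  then show "(G \<longlongrightarrow> A + B) at_top" "(G \<longlongrightarrow> A + B) at_bot"
    by (simp_all flip: cis_cnj)
  show "cmod B \<noteq> cmod A \<Longrightarrow> G x \<noteq> 0"
    unfolding G by (auto simp: norm_mult)
  have "continuous_on UNIV \<phi>"
    unfolding \<phi>_def using g by (intro continuous_intros) auto
  then show "cmod B \<noteq> cmod A \<Longrightarrow> wn G = (if cmod B < cmod A then 0 else 1)"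
    unfolding G using \<phi>_top \<phi>_bot by (rule wn_circle[rotated])
qed

theorem mainTheorem2:
  fixes C :: "complex^'m^'m" and \<kappa> d :: "complex^'m" and \<omega>0 \<gamma> :: real
  assumes "\<gamma> > 0" and "invertible C"
  shows "(\<exists>c r. r \<ge> 0 \<and> (\<lambda>\<omega>. det (Smat C \<kappa> d \<omega>0 \<gamma> \<omega>)) ` UNIV \<subseteq> sphere c r
            \<and> (\<lambda>\<omega>. det (Smat C \<kappa> d \<omega>0 \<gamma> \<omega>)) ` UNIV \<union> {det C} = sphere c r
            \<and> (Re (rho C \<kappa> d \<gamma>) = 1/2 \<longrightarrow> 0 \<in> sphere c r))
       \<and> ((\<lambda>\<omega>. det (Smat C \<kappa> d \<omega>0 \<gamma> \<omega>)) \<longlongrightarrow> det C) at_top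
       \<and> ((\<lambda>\<omega>. det (Smat C \<kappa> d \<omega>0 \<gamma> \<omega>)) \<longlongrightarrow> det C) at_bot
       \<and> (Re (rho C \<kappa> d \<gamma>) \<noteq> 1/2 \<longrightarrow>
            (\<forall>\<omega>. det (Smat C \<kappa> d \<omega>0 \<gamma> \<omega>) \<noteq> 0) \<and>
            wn (\<lambda>\<omega>. det (Smat C \<kappa> d \<omega>0 \<gamma> \<omega>)) =
              (if Re (rho C \<kappa> d \<gamma>) < 1/2 then 0 else 1))"
proof -
  define D where "D = det C"
  define \<rho> where "\<rho> = rho C \<kappa> d \<gamma>"
  define G where "G = (\<lambda>\<omega>. D * (1 - \<rho>) - D * \<rho> * cis (2 * arctan ((\<omega> - \<omega>0) / \<gamma>)))"
  have D: "D \<noteq> 0"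
    using assms(2) invertible_det_nz unfolding D_def by blast
  have Smat_G: "det (Smat C \<kappa> d \<omega>0 \<gamma> \<omega>) = G \<omega>" for \<omega>
    unfolding G_def D_def \<rho>_def by (rule det_Smat[OF assms])
  have A_plus_B: "D * (1 - \<rho>) + D * \<rho> = D"
    by (simp add: algebra_simps)
  note curve = cis_double_arctan_curve[OF assms(1), where A = "D * (1 - \<rho>)" and B = "D * \<rho>"
      and a = \<omega>0, folded G_def, unfolded A_plus_B]
  have radius_eq_iff: "cmod (D * \<rho>) = cmod (D * (1 - \<rho>)) \<longleftrightarrow> Re \<rho> = 1/2"
    using D cmod_one_minus_eq_cmod_iff[of \<rho>] by (auto simp: norm_mult)
  have radius_less_iff: "cmod (D * \<rho>) < cmod (D * (1 - \<rho>)) \<longleftrightarrow> Re \<rho> < 1/2"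
    using D by (simp add: norm_mult cmod_less_cmod_one_minus_iff)
  have circle: "\<exists>c r. r \<ge> 0 \<and> range G \<subseteq> sphere c r \<and> range G \<union> {D} = sphere c r
      \<and> (Re \<rho> = 1/2 \<longrightarrow> 0 \<in> sphere c r)"
  proof (intro exI[of _ "D * (1 - \<rho>)"] exI[of _ "cmod (D * \<rho>)"] conjI impI norm_ge_zero curve(1))
    show "range G \<subseteq> sphere (D * (1 - \<rho>)) (cmod (D * \<rho>))"
      using curve(1) by blast
    show "0 \<in> sphere (D * (1 - \<rho>)) (cmod (D * \<rho>))" if "Re \<rho> = 1/2"
      using that radius_eq_iff by simp
  qed
  have nonzero: "G \<omega> \<noteq> 0" if "Re \<rho> \<noteq> 1/2" for \<omega>
    using curve(4)[of \<omega>] that radius_eq_iff by (simp add: G_def)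
  show ?thesis
    unfolding Smat_G D_def[symmetric] \<rho>_def[symmetric] using radius_eq_iff
    by (intro conjI impI allI circle curve(2,3) nonzero curve(5)[unfolded radius_less_iff]) simp_all
qed
end
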